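(* Assume $x(0)=x'(0)=0$. If $x(t)\to0$ as $t\to\infty$, then $y_2(t)\to0$ as $t\to\infty$.
   Context: Standing assumptions: $\omega>0$ is a constant; $p\in C^1([0,\infty))$ with $p(t)>0$ and $p'(t)<0$ for all $t\ge0$, $\int_0^\infty p(t)\,dt=\infty$ and $\int_0^\infty p(t)^2\,dt<\infty$; $f\in L^1_{\mathrm{loc}}([0,\infty))$. $x$ denotes the solution of $x''(t)+p(t)x'(t)+\omega^2x(t)=f(t)$, $t\ge0$. Notation: $y_1(t)=\int_0^te^{-\omega^2(t-s)}f(s)\,ds$; $y_2(t)=\int_0^te^{-\omega^2(t-s)}y_1(s)\,ds=\int_0^t(t-s)e^{-\omega^2(t-s)}f(s)\,ds$ (the solution of $y_2'=-\omega^2y_2+y_1$, $y_2(0)=0$). *)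

theory Defs
  imports "HOL-Analysis.Analysis"
begin

definition y1 :: "real \<Rightarrow> (real \<Rightarrow> real) \<Rightarrow> real \<Rightarrow> real" where
  "y1 \<omega> f t = integral {0..t} (\<lambda>s. exp (-(\<omega>\<^sup>2) * (t - s)) * f s)"

definition y2 :: "real \<Rightarrow> (real \<Rightarrow> real) \<Rightarrow> real \<Rightarrow> real" where
  "y2 \<omega> f t = integral {0..t} (\<lambda>s. (t - s) * exp (-(\<omega>\<^sup>2) * (t - s)) * f s)"

end

theory Submission
  imports Defs "HOL-Real_Asymp.Real_Asymp"
begin

(* With K(u) = u e^{-k u}, k = \<omega>^2, we have y2 = K * f, and f = x'' + p x' + k x in the weak sense.
   Integrating by parts twice (using x(0) = x'(0) = 0, K(0) = 0, K'(0) = 1) moves all derivatives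
   onto K and p and gives y2(t) = x(t) + \<integral>_0^t W(t,s) x(s) ds for an explicit kernel W built from
   K, K', K'', p and p'.  Since f is only locally integrable, the first integration by parts is
   Fubini's theorem on the triangle 0 \<le> s \<le> u \<le> t.  K, K' and K'' are O(e^{-k u/2}) and p is
   positive and decreasing, so |W(t,s)| \<le> C e^{-k(t-s)/2} (1 - p'(s)) with \<integral>_0^\<infinity> -p' \<le> p(0);
   such a kernel maps functions tending to 0 to functions tending to 0. *)

section \<open>Fubini's theorem on a triangle\<close>

lemma absolutely_integrable_borel_representative:
  fixes g :: "real \<Rightarrow> real"
  assumes "g absolutely_integrable_on S" and "S \<in> sets lborel"
  obtains h where "h \<in> borel_measurable lborel" "integrable lborel h"
    "\<And>x. x \<notin> S \<Longrightarrow> h x = 0" "negligible {x \<in> S. g x \<noteq> h x}"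
proof -
  have g_meas: "(\<lambda>x. indicator S x * g x) \<in> borel_measurable lebesgue"
    using assms(1) unfolding set_integrable_def by (auto dest: borel_measurable_integrable)
  then obtain h0 where h0[measurable]: "h0 \<in> borel_measurable lborel"
    and "AE x in lborel. indicator S x * g x = h0 x"
    using completion_ex_borel_measurable_real by blast
  define h where "h x = indicator S x * h0 x" for x
  have h_meas[measurable]: "h \<in> borel_measurable lborel"
    unfolding h_def using assms(2) by measurable
  have "AE x in lborel. indicator S x * g x = h x"
    using \<open>AE x in lborel. _\<close> by eventually_elim (auto simp: h_def indicator_def)
  then have ae: "AE x in lebesgue. indicator S x * g x = h x"
    by (rule AE_completion)
  then obtain N where N: "negligible N" "{x. indicator S x * g x \<noteq> h x} \<subseteq> N"
    unfolding eventually_ae_filter_negligible by blast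
  have "integrable lebesgue h"
    using assms(1) integrable_cong_AE[OF g_meas _ ae] h_meas
    unfolding set_integrable_def by (simp add: measurable_completion)
  then have "integrable lborel h"
    by (simp add: integrable_completion)
  moreover have "{x \<in> S. g x \<noteq> h x} \<subseteq> N"
    using N(2) by auto
  ultimately show ?thesis
    using that[OF h_meas] negligible_subset[OF N(1)] by (auto simp: h_def)
qed

lemma integrable_pair_triangle:
  fixes h \<phi> :: "real \<Rightarrow> real"
  assumes [measurable]: "h \<in> borel_measurable lborel" and h_int: "integrable lborel h"
    and \<phi>: "continuous_on {a..b} \<phi>"
  shows "integrable (lborel \<Otimes>\<^sub>M lborel)
           (\<lambda>(s,u). h s * (if s \<le> u then indicator {a..b} u * \<phi> u else 0))"
proof -
  obtain C where C: "C > 0" "\<forall>u\<in>{a..b}. \<bar>\<phi> u\<bar> \<le> C"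
    using compact_imp_bounded[OF compact_continuous_image[OF \<phi> compact_Icc]]
    by (auto simp: bounded_pos)
  have [measurable]: "(\<lambda>u. indicator {a..b} u * \<phi> u) \<in> borel_measurable borel"
    using borel_measurable_continuous_on_indicator[OF _ \<phi>] by simp
  have "integrable (lborel \<Otimes>\<^sub>M lborel) (\<lambda>(s,u). \<bar>h s\<bar> * (C * indicator {a..b} u))"
  proof (rule lborel_pair.Fubini_integrable)
    show "integrable lborel
        (\<lambda>s. \<integral>u. norm (case (s, u) of (s, u) \<Rightarrow> \<bar>h s\<bar> * (C * indicator {a..b} u)) \<partial>lborel)"
      using h_int by (cases "a \<le> b") (auto simp: abs_mult)
  qed (use borel_integrable_compact[of "{a..b}" "\<lambda>_. 1::real"] in auto)
  then show ?thesis
  proof (rule Bochner_Integration.integrable_bound)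
    show "AE x in lborel \<Otimes>\<^sub>M lborel.
        norm (case x of (s, u) \<Rightarrow> h s * (if s \<le> u then indicator {a..b} u * \<phi> u else 0))
        \<le> norm (case x of (s, u) \<Rightarrow> \<bar>h s\<bar> * (C * indicator {a..b} u))"
      using C by (intro AE_I2) (auto simp: abs_mult indicator_def intro!: mult_left_mono)
  qed measurable
qed

lemma has_integral_swap_triangle_borel:
  fixes h \<phi> :: "real \<Rightarrow> real"
  assumes h_meas: "h \<in> borel_measurable lborel" and h_int: "integrable lborel h"
    and h_out: "\<And>x. x \<notin> {a..b} \<Longrightarrow> h x = 0" and \<phi>: "continuous_on {a..b} \<phi>"
  shows "((\<lambda>s. h s * integral {s..b} \<phi>) has_integral
           integral {a..b} (\<lambda>u. \<phi> u * integral {a..u} h)) {a..b}"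
proof -
  \<comment> \<open>Both sides are iterated integrals of F, which is supported on the triangle a \<le> s \<le> u \<le> b.\<close>
  define F where "F s u = h s * (if s \<le> u then indicator {a..b} u * \<phi> u else 0)" for s u :: real
  have F_int: "integrable (lborel \<Otimes>\<^sub>M lborel) (\<lambda>(s,u). F s u)"
    unfolding F_def by (rule integrable_pair_triangle[OF h_meas h_int \<phi>])
  have inner_s: "(\<integral>s. F s u \<partial>lborel) = indicator {a..b} u *\<^sub>R (\<phi> u * integral {a..u} h)" for u
  proof (cases "u \<in> {a..b}")
    case True
    have "(\<lambda>s. F s u) = (\<lambda>s. \<phi> u * (indicator {a..u} s *\<^sub>R h s))"
      using True h_out by (auto simp: F_def indicator_def fun_eq_iff)
    moreover have "(LINT s:{a..u}|lborel. h s) = integral {a..u} h"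
      using integrable_mult_indicator[OF _ h_int, of "{a..u}"]
      by (intro set_borel_integral_eq_integral(2)) (auto simp: set_integrable_def)
    ultimately show ?thesis
      using True by (simp add: set_lebesgue_integral_def)
  next
    case False
    then have "(\<lambda>s. F s u) = (\<lambda>_. 0)"
      by (auto simp: F_def)
    with False show ?thesis
      by simp
  qed
  have inner_u: "(\<integral>u. F s u \<partial>lborel) = indicator {a..b} s *\<^sub>R (h s * integral {s..b} \<phi>)" for s
  proof (cases "s \<in> {a..b}")
    case True
    have "(\<lambda>u. F s u) = (\<lambda>u. h s * (indicator {s..b} u *\<^sub>R \<phi> u))"
      using True by (auto simp: F_def indicator_def fun_eq_iff)
    moreover have "(LINT u:{s..b}|lborel. \<phi> u) = integral {s..b} \<phi>"
      using True borel_integrable_compact[of "{s..b}" \<phi>] continuous_on_subset[OF \<phi>]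
      by (intro set_borel_integral_eq_integral(2)) (auto simp: set_integrable_def)
    ultimately show ?thesis
      using True by (simp add: set_lebesgue_integral_def)
  qed (simp add: F_def h_out)
  have "continuous_on {a..b} (\<lambda>u. \<phi> u * integral {a..u} h)"
    using integrable_mult_indicator[OF _ h_int, of "{a..b}"]
    by (intro continuous_intros \<phi> indefinite_integral_continuous_1 set_borel_integral_eq_integral(1))
       (auto simp: set_integrable_def)
  from borel_integrable_compact[OF compact_Icc this]
  have "(\<integral>u. (\<integral>s. F s u \<partial>lborel) \<partial>lborel) = integral {a..b} (\<lambda>u. \<phi> u * integral {a..u} h)"
    unfolding inner_s
    by (intro set_borel_integral_eq_integral(2)[unfolded set_lebesgue_integral_def])
       (auto simp: set_integrable_def)
  moreover have h_set_int: "set_integrable lborel {a..b} (\<lambda>s. h s * integral {s..b} \<phi>)"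
    using lborel_pair.integrable_fst'[OF F_int] by (simp add: set_integrable_def inner_u)
  then have "(\<integral>s. (\<integral>u. F s u \<partial>lborel) \<partial>lborel) = integral {a..b} (\<lambda>s. h s * integral {s..b} \<phi>)"
    unfolding inner_u by (rule set_borel_integral_eq_integral(2)[unfolded set_lebesgue_integral_def])
  ultimately show ?thesis
    using set_borel_integral_eq_integral(1)[OF h_set_int] lborel_pair.Fubini_integral[OF F_int]
    by (metis has_integral_integrable_integral)
qed

lemma has_integral_swap_triangle:
  fixes g \<phi> :: "real \<Rightarrow> real"
  assumes g: "g absolutely_integrable_on {a..b}" and \<phi>: "continuous_on {a..b} \<phi>"
  shows "((\<lambda>s. g s * integral {s..b} \<phi>) has_integral
           integral {a..b} (\<lambda>u. \<phi> u * integral {a..u} g)) {a..b}"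
proof -
  obtain h where h: "h \<in> borel_measurable lborel" "integrable lborel h" "\<And>x. x \<notin> {a..b} \<Longrightarrow> h x = 0"
    and N: "negligible {x \<in> {a..b}. g x \<noteq> h x}"
    using absolutely_integrable_borel_representative[OF g] by auto
  have "integral {a..u} h = integral {a..u} g" if "u \<in> {a..b}" for u
    using that by (intro integral_spike[OF N]) auto
  then have "integral {a..b} (\<lambda>u. \<phi> u * integral {a..u} h) = integral {a..b} (\<lambda>u. \<phi> u * integral {a..u} g)"
    by (intro integral_cong) simp
  with has_integral_swap_triangle_borel[OF h \<phi>]
  have "((\<lambda>s. h s * integral {s..b} \<phi>) has_integral integral {a..b} (\<lambda>u. \<phi> u * integral {a..u} g)) {a..b}"
    by simp
  then show ?thesis
    by (rule has_integral_spike[OF N, rotated]) auto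
qed

lemma has_integral_product_rule:
  fixes f g f' g' :: "real \<Rightarrow> real"
  assumes "a \<le> b"
    and "\<And>s. s \<in> {a..b} \<Longrightarrow> (f has_real_derivative f' s) (at s within {a..b})"
    and "\<And>s. s \<in> {a..b} \<Longrightarrow> (g has_real_derivative g' s) (at s within {a..b})"
  shows "((\<lambda>s. f' s * g s + f s * g' s) has_integral f b * g b - f a * g a) {a..b}"
  using assms
  by (intro fundamental_theorem_of_calculus)
     (auto intro!: derivative_eq_intros simp flip: has_real_derivative_iff_has_vector_derivative)

section \<open>Integral operators with exponentially decaying kernels\<close>

lemma has_integral_exp_decay:
  fixes c t :: real
  assumes "0 < c" "0 \<le> t"
  shows "((\<lambda>s. exp (-c*(t - s))) has_integral (1 - exp (-c*t)) / c) {0..t}"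
proof -
  have "((\<lambda>s. exp (-c*(t - s))) has_integral exp (-c*(t - t)) / c - exp (-c*(t - 0)) / c) {0..t}"
    using assms
    by (intro fundamental_theorem_of_calculus)
       (auto intro!: derivative_eq_intros simp flip: has_real_derivative_iff_has_vector_derivative)
  then show ?thesis
    by (simp add: diff_divide_distrib)
qed

lemma abs_le_eps_plus_exp_decay:
  fixes x :: "real \<Rightarrow> real"
  assumes x_cont: "continuous_on {0..} x" and x_lim: "(x \<longlongrightarrow> 0) at_top"
    and "0 \<le> c" "0 < \<delta>"
  obtains B where "0 \<le> B" "\<And>s. 0 \<le> s \<Longrightarrow> \<bar>x s\<bar> \<le> \<delta> + B * exp (-c * s)"
proof -
  obtain S where S: "\<And>s. S \<le> s \<Longrightarrow> \<bar>x s\<bar> < \<delta>"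
    using x_lim \<open>0 < \<delta>\<close> unfolding tendsto_iff eventually_at_top_linorder by (auto simp: dist_real_def)
  have "compact (x ` {0..S})"
    by (intro compact_continuous_image continuous_on_subset[OF x_cont]) auto
  then obtain M where M: "0 < M" "\<forall>s\<in>{0..S}. \<bar>x s\<bar> \<le> M"
    by (auto dest!: compact_imp_bounded simp: bounded_pos)
  have "\<bar>x s\<bar> \<le> \<delta> + M * exp (c*S) * exp (-c * s)" if "0 \<le> s" for s
  proof (cases "S \<le> s")
    case True
    then show ?thesis
      using S[of s] M by (simp add: add_increasing2 order_less_imp_le)
  next
    case False
    have "M \<le> M * exp (c*(S - s))"
      using M False \<open>0 \<le> c\<close> by simp
    also have "\<dots> = M * exp (c*S) * exp (-c * s)"
      by (simp add: algebra_simps flip: exp_add)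
    moreover have "\<bar>x s\<bar> \<le> M"
      using M that False by auto
    ultimately show ?thesis
      using \<open>0 < \<delta>\<close> by linarith
  qed
  with M show ?thesis
    by (intro that[of "M * exp (c*S)"]) auto
qed

lemma abs_integral_exp_dominated_le:
  fixes w q x :: "real \<Rightarrow> real"
  assumes c: "0 < c" and t: "0 \<le> t" and C: "0 \<le> C" and \<delta>: "0 \<le> \<delta>" and B: "0 \<le> B"
    and wx_int: "(\<lambda>s. w s * x s) integrable_on {0..t}"
    and w_bound: "\<And>s. s \<in> {0..t} \<Longrightarrow> \<bar>w s\<bar> \<le> C * exp (-c*(t - s)) * (1 + q s)"
    and q_cont: "continuous_on {0..t} q" and q_nonneg: "\<And>s. s \<in> {0..t} \<Longrightarrow> 0 \<le> q s"
    and q_int: "integral {0..t} q \<le> Q"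
    and x_bound: "\<And>s. s \<in> {0..t} \<Longrightarrow> \<bar>x s\<bar> \<le> \<delta> + B * exp (-c * s)"
  shows "\<bar>integral {0..t} (\<lambda>s. w s * x s)\<bar> \<le> C*\<delta>*(1/c + Q) + C*B*exp (-c*t)*(t + Q)"
proof -
  define h where
    "h s = C*\<delta> * (exp (-c*(t - s)) + q s) + C*B*exp (-c*t) * (1 + q s)" for s
  let ?Iq = "integral {0..t} q"
  have "(q has_integral ?Iq) {0..t}"
    using q_cont by (intro integrable_integral integrable_continuous_real)
  moreover have "((\<lambda>_. 1) has_integral t) {0..t}"
    using has_integral_const_real[of "1::real" 0 t] t by simp
  ultimately have h_int: "(h has_integral
      C*\<delta> * ((1 - exp (-c*t)) / c + ?Iq) + C*B*exp (-c*t) * (t + ?Iq)) {0..t}"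
    unfolding h_def
    by (intro has_integral_add has_integral_mult_right has_integral_exp_decay c t)
  have "\<bar>w s * x s\<bar> \<le> h s" if s: "s \<in> {0..t}" for s
  proof -
    have decay: "exp (-c*(t - s)) \<le> 1" "exp (-c*(t - s)) * exp (-c * s) = exp (-c*t)"
      using s c by (auto simp flip: exp_add simp: algebra_simps)
    have "\<bar>w s * x s\<bar> \<le> C * exp (-c*(t - s)) * (1 + q s) * (\<delta> + B * exp (-c * s))"
      unfolding abs_mult using s q_nonneg[OF s] w_bound x_bound C
      by (intro mult_mono) auto
    also have "\<dots> = C*\<delta> * (exp (-c*(t - s)) * (1 + q s))
                     + C*B*(exp (-c*(t - s)) * exp (-c * s)) * (1 + q s)"
      by (simp add: algebra_simps)
    also have "\<dots> = C*\<delta> * (exp (-c*(t - s)) * (1 + q s)) + C*B*exp (-c*t) * (1 + q s)"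
      by (simp only: decay(2))
    also have "\<dots> \<le> h s"
      unfolding h_def using decay(1) q_nonneg[OF s] B C \<delta>
      by (intro add_mono mult_left_mono) (auto simp: algebra_simps mult_left_le)
    finally show ?thesis .
  qed
  then have "\<bar>integral {0..t} (\<lambda>s. w s * x s)\<bar> \<le> integral {0..t} h"
    using integral_norm_bound_integral[OF wx_int has_integral_integrable[OF h_int]] by simp
  also have "\<dots> \<le> C*\<delta>*(1/c + Q) + C*B*exp (-c*t)*(t + Q)"
    unfolding integral_unique[OF h_int] using c C \<delta> B q_int
    by (intro add_mono mult_left_mono) (auto simp: diff_divide_distrib)
  finally show ?thesis .
qed

lemma tendsto_integral_exp_dominated_zero:
  fixes w :: "real \<Rightarrow> real \<Rightarrow> real" and q x :: "real \<Rightarrow> real"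
  assumes c: "0 < c"
    and w_cont: "\<And>t. continuous_on {0..t} (w t)"
    and w_bound: "\<And>t s. 0 \<le> s \<Longrightarrow> s \<le> t \<Longrightarrow> \<bar>w t s\<bar> \<le> C * exp (-c*(t - s)) * (1 + q s)"
    and q_cont: "continuous_on {0..} q" and q_nonneg: "\<And>s. 0 \<le> s \<Longrightarrow> 0 \<le> q s"
    and q_int: "\<And>t. 0 \<le> t \<Longrightarrow> integral {0..t} q \<le> Q"
    and x_cont: "continuous_on {0..} x" and x_lim: "(x \<longlongrightarrow> 0) at_top"
  shows "((\<lambda>t. integral {0..t} (\<lambda>s. w t s * x s)) \<longlongrightarrow> 0) at_top"
proof (rule tendstoI)
  fix \<epsilon> :: real
  assume "0 < \<epsilon>"
  have "0 \<le> C * (1 + q 0)"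
    using w_bound[of 0 0] abs_ge_zero[of "w 0 0"] by simp
  then have C: "0 \<le> C"
    using q_nonneg[of 0] by (simp add: zero_le_mult_iff)
  have Q: "0 \<le> Q"
    using q_int[of 0] by simp
  define M where "M = C * (1/c + Q)"
  define \<delta> where "\<delta> = \<epsilon> / (2 * (M + 1))"
  have "0 \<le> M"
    using C Q c by (simp add: M_def)
  then have \<delta>: "0 < \<delta>"
    using \<open>0 < \<epsilon>\<close> by (simp add: \<delta>_def)
  have "C*\<delta>*(1/c + Q) = M * \<delta>"
    by (simp add: M_def mult_ac)
  also have "\<dots> < (M + 1) * \<delta>"
    using \<delta> by simp
  also have "\<dots> = \<epsilon>/2"
    using \<open>0 \<le> M\<close> by (simp add: \<delta>_def field_simps)
  finally have small: "C*\<delta>*(1/c + Q) < \<epsilon>/2" .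
  obtain B where B: "0 \<le> B" "\<And>s. 0 \<le> s \<Longrightarrow> \<bar>x s\<bar> \<le> \<delta> + B * exp (-c * s)"
    using abs_le_eps_plus_exp_decay[OF x_cont x_lim less_imp_le[OF c] \<delta>] by blast
  have "((\<lambda>t. C*B*exp (-c*t)*(t + Q)) \<longlongrightarrow> 0) at_top"
    using c by real_asymp
  then have "eventually (\<lambda>t. C*B*exp (-c*t)*(t + Q) < \<epsilon>/2) at_top"
    by (rule order_tendstoD) (simp add: \<open>0 < \<epsilon>\<close>)
  then show "eventually (\<lambda>t. dist (integral {0..t} (\<lambda>s. w t s * x s)) 0 < \<epsilon>) at_top"
    using eventually_ge_at_top[of 0]
  proof eventually_elim
    case (elim t)
    have "(\<lambda>s. w t s * x s) integrable_on {0..t}"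
      by (intro integrable_continuous_real continuous_intros w_cont continuous_on_subset[OF x_cont]) auto
    then have "\<bar>integral {0..t} (\<lambda>s. w t s * x s)\<bar> \<le> C*\<delta>*(1/c + Q) + C*B*exp (-c*t)*(t + Q)"
      using elim w_bound q_nonneg q_int B continuous_on_subset[OF q_cont]
      by (intro abs_integral_exp_dominated_le[where q = q and Q = Q, OF c _ C less_imp_le[OF \<delta>] B(1)])
         auto
    with elim small show ?case
      unfolding dist_real_def diff_zero by linarith
  qed
qed

section \<open>The kernel of y2\<close>

definition y2_kernel :: "real \<Rightarrow> real \<Rightarrow> real" where
  "y2_kernel k u = u * exp (-k*u)"

definition y2_kernel' :: "real \<Rightarrow> real \<Rightarrow> real" where
  "y2_kernel' k u = (1 - k*u) * exp (-k*u)"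

definition y2_kernel'' :: "real \<Rightarrow> real \<Rightarrow> real" where
  "y2_kernel'' k u = (k\<^sup>2*u - 2*k) * exp (-k*u)"

lemma y2_eq_integral_y2_kernel: "y2 \<omega> f t = integral {0..t} (\<lambda>s. y2_kernel (\<omega>\<^sup>2) (t - s) * f s)"
  by (simp add: y2_def y2_kernel_def)

lemma has_real_derivative_y2_kernel_reflected:
  "((\<lambda>s. y2_kernel k (t - s)) has_real_derivative - y2_kernel' k (t - s)) (at s within S)"
  unfolding y2_kernel_def y2_kernel'_def by (auto intro!: derivative_eq_intros simp: algebra_simps)

lemma has_real_derivative_y2_kernel'_reflected:
  "((\<lambda>s. y2_kernel' k (t - s)) has_real_derivative - y2_kernel'' k (t - s)) (at s within S)"
  unfolding y2_kernel'_def y2_kernel''_def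
  by (auto intro!: derivative_eq_intros simp: algebra_simps power2_eq_square)

lemma continuous_on_y2_kernels [continuous_intros]:
  "continuous_on S (\<lambda>s. y2_kernel k (t - s))"
  "continuous_on S (\<lambda>s. y2_kernel' k (t - s))"
  "continuous_on S (\<lambda>s. y2_kernel'' k (t - s))"
  unfolding y2_kernel_def y2_kernel'_def y2_kernel''_def by (intro continuous_intros)+

lemma integral_y2_kernel'_reflected:
  assumes "s \<le> t"
  shows "integral {s..t} (\<lambda>u. y2_kernel' k (t - u)) = y2_kernel k (t - s)"
proof -
  have "((\<lambda>u. y2_kernel' k (t - u)) has_integral - y2_kernel k (t - t) - - y2_kernel k (t - s)) {s..t}"
    using assms has_real_derivative_y2_kernel_reflected
    by (intro fundamental_theorem_of_calculus)
       (auto intro!: derivative_eq_intros simp flip: has_real_derivative_iff_has_vector_derivative)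
  then show ?thesis
    by (simp add: y2_kernel_def integral_unique)
qed

lemma has_integral_y2_kernel_weak_second_derivative:
  fixes x x' g :: "real \<Rightarrow> real"
  assumes t: "0 \<le> t"
    and x_deriv: "\<And>s. s \<in> {0..t} \<Longrightarrow> (x has_real_derivative x' s) (at s within {0..t})"
    and x'_cont: "continuous_on {0..t} x'"
    and g: "g absolutely_integrable_on {0..t}"
    and x'_eq: "\<And>u. u \<in> {0..t} \<Longrightarrow> integral {0..u} g = x' u"
    and x0: "x 0 = 0"
  shows "((\<lambda>s. y2_kernel k (t - s) * g s - y2_kernel'' k (t - s) * x s) has_integral x t) {0..t}"
proof -
  let ?I = "integral {0..t} (\<lambda>u. y2_kernel' k (t - u) * x' u)"
  have "((\<lambda>s. g s * integral {s..t} (\<lambda>u. y2_kernel' k (t - u))) has_integral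
          integral {0..t} (\<lambda>u. y2_kernel' k (t - u) * integral {0..u} g)) {0..t}"
    by (rule has_integral_swap_triangle[OF g]) (intro continuous_intros)
  moreover have "integral {0..t} (\<lambda>u. y2_kernel' k (t - u) * integral {0..u} g) = ?I"
    by (rule integral_cong) (simp add: x'_eq)
  ultimately have "((\<lambda>s. g s * integral {s..t} (\<lambda>u. y2_kernel' k (t - u))) has_integral ?I) {0..t}"
    by simp
  then have swap: "((\<lambda>s. y2_kernel k (t - s) * g s) has_integral ?I) {0..t}"
    by (rule has_integral_eq[rotated]) (simp add: integral_y2_kernel'_reflected)
  have parts: "((\<lambda>s. y2_kernel' k (t - s) * x' s - y2_kernel'' k (t - s) * x s) has_integral x t) {0..t}"
    using has_integral_product_rule[OF t has_real_derivative_y2_kernel'_reflected[of k t] x_deriv] x0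
    by (simp add: y2_kernel'_def[of k 0] algebra_simps)
  have "(\<lambda>u. y2_kernel' k (t - u) * x' u) integrable_on {0..t}"
    by (intro integrable_continuous_real continuous_intros x'_cont)
  from has_integral_add[OF has_integral_diff[OF swap integrable_integral[OF this]] parts]
  show ?thesis
    by simp
qed

definition y2_remainder_kernel ::
    "real \<Rightarrow> (real \<Rightarrow> real) \<Rightarrow> (real \<Rightarrow> real) \<Rightarrow> real \<Rightarrow> real \<Rightarrow> real" where
  "y2_remainder_kernel k p p' t s =
     y2_kernel'' k (t - s) + y2_kernel' k (t - s) * p s - y2_kernel k (t - s) * p' s
     + k * y2_kernel k (t - s)"

lemma has_integral_y2_kernel_representation:
  fixes k t :: real and p p' f x x' :: "real \<Rightarrow> real"
  assumes t: "0 \<le> t"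
    and p_deriv: "\<And>s. s \<in> {0..t} \<Longrightarrow> (p has_real_derivative p' s) (at s within {0..t})"
    and p'_cont: "continuous_on {0..t} p'"
    and x_deriv: "\<And>s. s \<in> {0..t} \<Longrightarrow> (x has_real_derivative x' s) (at s within {0..t})"
    and x'_cont: "continuous_on {0..t} x'"
    and f: "f absolutely_integrable_on {0..t}"
    and x_eq: "\<And>u. u \<in> {0..t} \<Longrightarrow> ((\<lambda>s. f s - p s * x' s - k * x s) has_integral x' u) {0..u}"
    and x0: "x 0 = 0"
  shows "((\<lambda>s. y2_kernel k (t - s) * f s) has_integral
           x t + integral {0..t} (\<lambda>s. y2_remainder_kernel k p p' t s * x s)) {0..t}"
proof -
  define g where "g s = f s - p s * x' s - k * x s" for s
  have p_cont: "continuous_on {0..t} p" and x_cont: "continuous_on {0..t} x"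
    using DERIV_continuous_on p_deriv x_deriv by blast+
  have "(\<lambda>s. p s * x' s + k * x s) absolutely_integrable_on {0..t}"
    by (intro absolutely_integrable_continuous_real continuous_intros p_cont x_cont x'_cont)
  from set_integral_diff(1)[OF f this]
  have "g absolutely_integrable_on {0..t}"
    unfolding g_def by (simp add: algebra_simps)
  from has_integral_y2_kernel_weak_second_derivative[OF t x_deriv x'_cont this _ x0]
  have x''_term: "((\<lambda>s. y2_kernel k (t - s) * g s - y2_kernel'' k (t - s) * x s) has_integral x t) {0..t}"
    using x_eq unfolding g_def by (blast intro: integral_unique)
  have px'_term: "((\<lambda>s. (y2_kernel k (t - s) * p' s - y2_kernel' k (t - s) * p s) * x s
                     + y2_kernel k (t - s) * p s * x' s) has_integral 0) {0..t}"
    using has_integral_product_rule[OF t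
        DERIV_mult[OF has_real_derivative_y2_kernel_reflected[of k t] p_deriv] x_deriv] x0
    by (simp add: y2_kernel_def[of k 0] algebra_simps)
  have "(\<lambda>s. y2_remainder_kernel k p p' t s * x s) integrable_on {0..t}"
    unfolding y2_remainder_kernel_def
    by (intro integrable_continuous_real continuous_intros p_cont p'_cont x_cont)
  from has_integral_add[OF has_integral_add[OF x''_term px'_term] integrable_integral[OF this]]
  show ?thesis
    unfolding add_0_right by (rule has_integral_eq[rotated])
       (simp add: g_def y2_remainder_kernel_def algebra_simps)
qed

lemma mult_exp_le_exp_half:
  fixes k u :: real
  assumes "0 < k" "0 \<le> u"
  shows "u * exp (-k*u) \<le> 2/k * exp (-(k/2)*u)"
proof -
  have "(k/2) * u \<le> exp ((k/2) * u)"
    using exp_ge_add_one_self[of "(k/2) * u"] by linarith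
  then have "u * exp (-(k/2)*u) \<le> 2/k"
    using assms by (simp add: exp_minus field_simps)
  then have "u * exp (-(k/2)*u) * exp (-(k/2)*u) \<le> 2/k * exp (-(k/2)*u)"
    by (rule mult_right_mono) simp
  then show ?thesis
    by (simp add: mult.assoc flip: exp_add)
qed

lemma exp_le_exp_half:
  fixes k u :: real
  assumes "0 \<le> k" "0 \<le> u"
  shows "exp (-k*u) \<le> exp (-(k/2)*u)"
  using assms by (simp add: mult_right_mono)

lemma y2_kernel_nonneg: "0 \<le> u \<Longrightarrow> 0 \<le> y2_kernel k u"
  by (simp add: y2_kernel_def)

lemma y2_kernel_le: "0 < k \<Longrightarrow> 0 \<le> u \<Longrightarrow> y2_kernel k u \<le> 2/k * exp (-(k/2)*u)"
  unfolding y2_kernel_def by (rule mult_exp_le_exp_half)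

lemma abs_y2_kernel'_le:
  assumes "0 < k" "0 \<le> u"
  shows "\<bar>y2_kernel' k u\<bar> \<le> 3 * exp (-(k/2)*u)"
proof -
  have "0 \<le> k*u"
    using assms by simp
  then have "\<bar>y2_kernel' k u\<bar> \<le> (1 + k*u) * exp (-k*u)"
    unfolding y2_kernel'_def abs_mult abs_exp_cancel by (intro mult_right_mono) auto
  also have "\<dots> = exp (-k*u) + k * (u * exp (-k*u))"
    by (simp add: algebra_simps)
  also have "\<dots> \<le> exp (-(k/2)*u) + k * (2/k * exp (-(k/2)*u))"
    using assms exp_le_exp_half mult_exp_le_exp_half
    by (intro add_mono mult_left_mono) auto
  finally show ?thesis
    using assms by simp
qed

lemma abs_y2_kernel''_le:
  assumes "0 < k" "0 \<le> u"
  shows "\<bar>y2_kernel'' k u\<bar> \<le> 4*k * exp (-(k/2)*u)"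
proof -
  have "0 \<le> k\<^sup>2*u"
    using assms by simp
  then have "\<bar>k\<^sup>2*u - 2*k\<bar> \<le> k\<^sup>2*u + 2*k"
    using assms by arith
  then have "\<bar>y2_kernel'' k u\<bar> \<le> (k\<^sup>2*u + 2*k) * exp (-k*u)"
    unfolding y2_kernel''_def abs_mult abs_exp_cancel by (rule mult_right_mono) simp
  also have "\<dots> = k\<^sup>2 * (u * exp (-k*u)) + 2*k * exp (-k*u)"
    by (simp add: algebra_simps)
  also have "\<dots> \<le> k\<^sup>2 * (2/k * exp (-(k/2)*u)) + 2*k * exp (-(k/2)*u)"
    using assms exp_le_exp_half mult_exp_le_exp_half
    by (intro add_mono mult_left_mono) auto
  finally show ?thesis
    using assms by (simp add: power2_eq_square)
qed

lemma abs_y2_remainder_kernel_le: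
  fixes p p' :: "real \<Rightarrow> real"
  assumes k: "0 < k" and "s \<le> t" and p: "0 < p s" "p s \<le> P" and p': "p' s \<le> 0"
  shows "\<bar>y2_remainder_kernel k p p' t s\<bar>
           \<le> (4*k + 3*P + 2 + 2/k) * exp (-(k/2)*(t - s)) * (1 - p' s)"
proof -
  define u where "u = t - s"
  define e where "e = exp (-(k/2)*u)"
  have u: "0 \<le> u"
    using assms by (simp add: u_def)
  have "\<bar>y2_remainder_kernel k p p' t s\<bar>
          = \<bar>y2_kernel'' k u + y2_kernel' k u * p s + y2_kernel k u * (- p' s) + k * y2_kernel k u\<bar>"
    by (simp add: y2_remainder_kernel_def u_def)
  also have "\<dots> \<le> \<bar>y2_kernel'' k u\<bar> + \<bar>y2_kernel' k u * p s\<bar> + \<bar>y2_kernel k u * (- p' s)\<bar>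
                   + \<bar>k * y2_kernel k u\<bar>"
    by arith
  also have "\<dots> = \<bar>y2_kernel'' k u\<bar> + \<bar>y2_kernel' k u\<bar> * p s + y2_kernel k u * (- p' s)
                   + k * y2_kernel k u"
    using y2_kernel_nonneg[OF u, of k] k p p' by (simp add: abs_mult)
  also have "\<dots> \<le> 4*k * e + 3 * e * P + 2/k * e * (- p' s) + k * (2/k * e)"
    using k p p' u abs_y2_kernel''_le abs_y2_kernel'_le y2_kernel_le
    unfolding e_def by (intro add_mono mult_mono mult_left_mono) auto
  also have "\<dots> = (4*k + 3*P + 2) * e + 2/k * e * (- p' s)"
    using k by (simp add: algebra_simps)
  also have "\<dots> \<le> (4*k + 3*P + 2 + 2/k) * e * (1 - p' s)"
  proof -
    have "0 \<le> 4*k + 3*P + 2"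
      using k p by linarith
    moreover have "0 \<le> e" "0 \<le> 2/k"
      using k by (auto simp: e_def)
    ultimately have "0 \<le> (4*k + 3*P + 2) * e * (- p' s)" "0 \<le> 2/k * e"
      using p' by (simp_all add: mult_nonneg_nonpos)
    moreover have "(4*k + 3*P + 2 + 2/k) * e * (1 - p' s)
        = ((4*k + 3*P + 2) * e + 2/k * e * (- p' s)) + ((4*k + 3*P + 2) * e * (- p' s) + 2/k * e)"
      using k by (simp add: field_simps)
    ultimately show ?thesis
      by linarith
  qed
  finally show ?thesis
    by (simp add: e_def u_def)
qed

lemma tendsto_integral_y2_remainder_kernel_zero:
  fixes k :: real and p p' x :: "real \<Rightarrow> real"
  assumes k: "0 < k"
    and p_deriv: "\<And>t. 0 \<le> t \<Longrightarrow> (p has_real_derivative p' t) (at t within {0..})"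
    and p'_cont: "continuous_on {0..} p'"
    and p_pos: "\<And>t. 0 \<le> t \<Longrightarrow> 0 < p t" and p'_nonpos: "\<And>t. 0 \<le> t \<Longrightarrow> p' t \<le> 0"
    and x_cont: "continuous_on {0..} x" and x_lim: "(x \<longlongrightarrow> 0) at_top"
  shows "((\<lambda>t. integral {0..t} (\<lambda>s. y2_remainder_kernel k p p' t s * x s)) \<longlongrightarrow> 0) at_top"
proof (rule tendsto_integral_exp_dominated_zero[where q = "\<lambda>s. - p' s" and Q = "p 0"])
  have p_cont: "continuous_on {0..} p"
    using DERIV_continuous_on p_deriv by blast
  have p_FTC: "(p' has_integral p t - p 0) {0..t}" if "0 \<le> t" for t
    using that DERIV_subset[OF p_deriv]
    by (intro fundamental_theorem_of_calculus)
       (auto simp flip: has_real_derivative_iff_has_vector_derivative)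
  have p_le: "p s \<le> p 0" if "0 \<le> s" for s
    using has_integral_le[OF p_FTC[OF that] has_integral_0] p'_nonpos by force
  show "\<bar>y2_remainder_kernel k p p' t s\<bar>
      \<le> (4*k + 3 * p 0 + 2 + 2/k) * exp (-(k/2)*(t - s)) * (1 + - p' s)" if "0 \<le> s" "s \<le> t" for t s
    using abs_y2_remainder_kernel_le[OF k] that p_pos p'_nonpos p_le by simp
  show "continuous_on {0..t} (y2_remainder_kernel k p p' t)" for t
    unfolding y2_remainder_kernel_def
    by (intro continuous_intros continuous_on_subset[OF p'_cont] continuous_on_subset[OF p_cont]) auto
  show "integral {0..t} (\<lambda>s. - p' s) \<le> p 0" if "0 \<le> t" for t
    using integral_unique[OF has_integral_neg[OF p_FTC[OF that]]] p_pos[OF that] by simp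
qed (use k p'_nonpos p'_cont x_cont x_lim in \<open>auto intro: continuous_intros\<close>)

theorem mainTheorem14:
  fixes \<omega> :: real and p p' f x x' :: "real \<Rightarrow> real"
  assumes omega_pos: "\<omega> > 0"
    and p_deriv: "\<And>t. t \<ge> 0 \<Longrightarrow> (p has_real_derivative p' t) (at t within {0..})"
    and p'_cont: "continuous_on {0..} p'"
    and p_pos: "\<And>t. t \<ge> 0 \<Longrightarrow> p t > 0"
    and p'_neg: "\<And>t. t \<ge> 0 \<Longrightarrow> p' t < 0"
    and p_int_div: "filterlim (\<lambda>T. integral {0..T} p) at_top at_top"
    and p_sq_int: "(\<lambda>t. (p t)\<^sup>2) integrable_on {0..}"
    and f_loc: "\<And>T. f absolutely_integrable_on {0..T}"
    and x_deriv: "\<And>t. t \<ge> 0 \<Longrightarrow> (x has_real_derivative x' t) (at t within {0..})"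
    and x'_cont: "continuous_on {0..} x'"
    and x_eq: "\<And>t. t \<ge> 0 \<Longrightarrow>
        ((\<lambda>s. f s - p s * x' s - \<omega>\<^sup>2 * x s) has_integral (x' t - x' 0)) {0..t}"
    and x0: "x 0 = 0" and x'0: "x' 0 = 0"
    and x_lim: "(x \<longlongrightarrow> 0) at_top"
  shows "(y2 \<omega> f \<longlongrightarrow> 0) at_top"
proof -
  let ?R = "\<lambda>t. integral {0..t} (\<lambda>s. y2_remainder_kernel (\<omega>\<^sup>2) p p' t s * x s)"
  have x_cont: "continuous_on {0..} x"
    using DERIV_continuous_on x_deriv by blast
  have R: "((\<lambda>s. y2_kernel (\<omega>\<^sup>2) (t - s) * f s) has_integral x t + ?R t) {0..t}" if "0 \<le> t" for t
    using that x_eq x'0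
    by (intro has_integral_y2_kernel_representation[where x' = x'] f_loc x0
          DERIV_subset[OF p_deriv] DERIV_subset[OF x_deriv]
          continuous_on_subset[OF p'_cont] continuous_on_subset[OF x'_cont]) auto
  have y2_eq: "x t + ?R t = y2 \<omega> f t" if "0 \<le> t" for t
    unfolding y2_eq_integral_y2_kernel using R[OF that] by (rule integral_unique[symmetric])
  have "((\<lambda>t. x t + ?R t) \<longlongrightarrow> 0 + 0) at_top"
    using omega_pos p_deriv p'_cont p_pos p'_neg x_cont x_lim
    by (intro tendsto_add x_lim tendsto_integral_y2_remainder_kernel_zero) (auto intro: less_imp_le)
  then show ?thesis
    by (simp add: Lim_transform_eventually eventually_mono[OF eventually_ge_at_top y2_eq])
qed

end
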